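(* Let $\mathcal{P}$ be a finite poset and $f\colon\mathcal{P}\to\{0,1\}$ be $\varepsilon$-far from $k$-monotone. Then the violation hypergraph of $f$ contains a matching of $(k+1)$-uniform hyperedges of size at least $\frac{\varepsilon|\mathcal{P}|}{k+1}$.
   Context: $f\colon\mathcal{P}\to\{0,1\}$ is $k$-monotone if there is no chain $x_1\prec x_2\prec\cdots\prec x_{k+1}$ in $\mathcal{P}$ with $f(x_1)=1$ and $f(x_i)\neq f(x_{i+1})$ for all $i\in[k]$; such a chain is a violation to $k$-monotonicity. $f$ is $\varepsilon$-far from $k$-monotone if the fraction of points on which $f$ differs from any $k$-monotone function is at least $\varepsilon$. The violation hypergraph of $f$ has vertex set $\mathcal{P}$ and a hyperedge $\{x_1,\dots,x_{k+1}\}$ for every violation $x_1\prec\cdots\prec x_{k+1}$. A matching is a set of pairwise disjoint hyperedges. *)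

theory Defs
  imports Main "HOL-Library.Disjoint_Sets" Complex_Main
begin

text \<open>A finite poset is modelled as a finite carrier set P of a type with a partial order;
  Boolean functions P -> {0,1} are modelled as functions to bool (True = 1).
  Only values of functions on P matter.\<close>

definition is_violation :: "'a::order set \<Rightarrow> nat \<Rightarrow> ('a \<Rightarrow> bool) \<Rightarrow> 'a list \<Rightarrow> bool" where
  "is_violation P k f xs \<longleftrightarrow>
     length xs = k + 1 \<and> set xs \<subseteq> P \<and> sorted_wrt (<) xs \<and>
     f (xs ! 0) \<and> (\<forall>i<k. f (xs ! i) \<noteq> f (xs ! (i + 1)))"

definition k_monotone :: "'a::order set \<Rightarrow> nat \<Rightarrow> ('a \<Rightarrow> bool) \<Rightarrow> bool" where
  "k_monotone P k f \<longleftrightarrow> \<not> (\<exists>xs. is_violation P k f xs)"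

definition eps_far :: "'a::order set \<Rightarrow> nat \<Rightarrow> real \<Rightarrow> ('a \<Rightarrow> bool) \<Rightarrow> bool" where
  "eps_far P k \<epsilon> f \<longleftrightarrow>
     (\<forall>g. k_monotone P k g \<longrightarrow> real (card {x\<in>P. f x \<noteq> g x}) / real (card P) \<ge> \<epsilon>)"

definition violation_edges :: "'a::order set \<Rightarrow> nat \<Rightarrow> ('a \<Rightarrow> bool) \<Rightarrow> 'a set set" where
  "violation_edges P k f = {set xs | xs. is_violation P k f xs}"

definition is_matching :: "'a set set \<Rightarrow> 'a set set \<Rightarrow> bool" where
  "is_matching E M \<longleftrightarrow> M \<subseteq> E \<and> disjoint M"

end

theory Submission
  imports Defs
begin

text \<open>Take a maximum matching M of the violation hypergraph. No violation avoids its
  vertices, so f restricted to S = P - \<Union>M has no violation. Such a restriction extends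
  to a k-monotone g on all of P: let h x be the length of the longest alternating chain
  in S below x that starts with a 1; h is monotone and bounded by k, and g = odd \<circ> h
  agrees with f on S. Hence f and g differ only on \<Union>M, which has at most (k+1)|M| points.\<close>

lemma sorted_wrt_less_imp_distinct: "sorted_wrt (<) (xs::'a::order list) \<Longrightarrow> distinct xs"
  by (induction xs) auto

lemma card_violation_edge:
  assumes "e \<in> violation_edges P k f"
  shows "card e = k + 1"
proof -
  obtain xs where "is_violation P k f xs" "e = set xs"
    using assms unfolding violation_edges_def by blast
  then show ?thesis
    using sorted_wrt_less_imp_distinct unfolding is_violation_def by (metis distinct_card)
qed

lemma violation_edges_subset_Pow: "violation_edges P k f \<subseteq> Pow P"
  unfolding violation_edges_def is_violation_def by auto

lemma finite_violation_edges: "finite P \<Longrightarrow> finite (violation_edges P k f)"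
  using violation_edges_subset_Pow by (metis finite_Pow_iff finite_subset)

lemma card_Union_le_uniform:
  assumes "\<forall>e\<in>M. card e = r"
  shows "card (\<Union>M) \<le> r * card M"
  using card_Union_le_sum_card[of M] assms by (simp add: mult.commute)

lemma eps_far_le_card_disagreement:
  assumes "eps_far P k \<epsilon> f" "k_monotone P k g"
  shows "\<epsilon> * real (card P) \<le> real (card {x\<in>P. f x \<noteq> g x})"
proof (cases "card P = 0")
  case False
  have "\<epsilon> \<le> real (card {x\<in>P. f x \<noteq> g x}) / real (card P)"
    using assms unfolding eps_far_def by blast
  with False show ?thesis by (simp add: pos_le_divide_eq)
qed simp

lemma ex_maximum_matching:
  assumes "finite E"
  shows "\<exists>M. is_matching E M \<and> (\<forall>M'. is_matching E M' \<longrightarrow> card M' \<le> card M)"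
proof (rule Lattices_Big.ex_has_greatest_nat[of _ "{}" _ "Suc (card E)"])
  show "is_matching E {}" by (simp add: is_matching_def disjoint_def)
  show "\<forall>M. is_matching E M \<longrightarrow> card M < Suc (card E)"
    using assms by (auto simp: is_matching_def less_Suc_eq_le intro: card_mono)
qed

lemma maximum_matching_hits_every_edge:
  assumes "finite E" and M: "is_matching E M" and max: "\<And>M'. is_matching E M' \<Longrightarrow> card M' \<le> card M"
    and "e \<in> E" "e \<noteq> {}"
  shows "e \<inter> \<Union>M \<noteq> {}"
proof
  assume disj: "e \<inter> \<Union>M = {}"
  have "finite M" using M \<open>finite E\<close> unfolding is_matching_def by (metis finite_subset)
  moreover have "e \<notin> M" using disj \<open>e \<noteq> {}\<close> by blast
  moreover have "is_matching E (insert e M)"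
    using M \<open>e \<in> E\<close> disj unfolding is_matching_def disjoint_def by blast
  ultimately show False using max[of "insert e M"] by simp
qed

lemma violation_meets_maximum_matching:
  assumes "finite P" and M: "is_matching (violation_edges P k f) M"
    and max: "\<And>M'. is_matching (violation_edges P k f) M' \<Longrightarrow> card M' \<le> card M"
    and "is_violation P k f xs"
  shows "set xs \<inter> \<Union>M \<noteq> {}"
proof -
  have "set xs \<in> violation_edges P k f"
    using assms(4) unfolding violation_edges_def by blast
  moreover have "set xs \<noteq> {}" using assms(4) unfolding is_violation_def by auto
  ultimately show ?thesis
    using maximum_matching_hits_every_edge[OF finite_violation_edges[OF \<open>finite P\<close>] M max] by blast
qed

text \<open>Along a violation every parity change forces h to increase strictly, so h would reach k + 1.\<close>

lemma k_monotone_odd_of_mono_bounded: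
  fixes h :: "'a::order \<Rightarrow> nat"
  assumes mono: "mono_on P h" and bounded: "\<And>x. x \<in> P \<Longrightarrow> h x \<le> k"
  shows "k_monotone P k (\<lambda>x. odd (h x))"
  unfolding k_monotone_def
proof
  assume "\<exists>xs. is_violation P k (\<lambda>x. odd (h x)) xs"
  then obtain xs where xs: "is_violation P k (\<lambda>x. odd (h x)) xs" by blast
  then have in_P: "xs ! i \<in> P" if "i \<le> k" for i
    using that unfolding is_violation_def by (auto intro: nth_mem)
  have "i + 1 \<le> h (xs ! i)" if "i \<le> k" for i
    using that
  proof (induction i)
    case 0
    then show ?case using xs unfolding is_violation_def by (cases "h (xs ! 0)") auto
  next
    case (Suc i)
    have "xs ! i < xs ! Suc i"
      using xs Suc.prems unfolding is_violation_def by (simp add: sorted_wrt_iff_nth_less)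
    then have "h (xs ! i) \<le> h (xs ! Suc i)"
      using mono in_P Suc.prems by (simp add: mono_on_def)
    moreover have "odd (h (xs ! i)) \<noteq> odd (h (xs ! Suc i))"
      using xs Suc.prems unfolding is_violation_def by simp
    then have "h (xs ! i) \<noteq> h (xs ! Suc i)" by auto
    ultimately show ?case using Suc by simp
  qed
  then show False using bounded[OF in_P] by fastforce
qed

definition alternating_chain :: "'a::order set \<Rightarrow> ('a \<Rightarrow> bool) \<Rightarrow> 'a list \<Rightarrow> bool" where
  "alternating_chain S f ys \<longleftrightarrow>
     set ys \<subseteq> S \<and> sorted_wrt (<) ys \<and> (\<forall>i<length ys. f (ys ! i) = even i)"

definition alternation_height :: "'a::order set \<Rightarrow> ('a \<Rightarrow> bool) \<Rightarrow> 'a \<Rightarrow> nat" where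
  "alternation_height S f x =
     Max {length ys | ys. alternating_chain S f ys \<and> (\<forall>y\<in>set ys. y \<le> x)}"

lemma length_alternating_chain_le:
  assumes "finite S" "alternating_chain S f ys"
  shows "length ys \<le> card S"
proof -
  have "length ys = card (set ys)"
    using assms(2) sorted_wrt_less_imp_distinct unfolding alternating_chain_def
    by (metis distinct_card)
  also have "\<dots> \<le> card S"
    using assms unfolding alternating_chain_def by (simp add: card_mono)
  finally show ?thesis .
qed

lemma sorted_wrt_less_le_last:
  assumes "sorted_wrt (<) (ys::'a::order list)" "y \<in> set ys"
  shows "y \<le> last ys"
proof -
  obtain j where j: "j < length ys" "ys ! j = y" using assms(2) by (meson in_set_conv_nth)
  then have last: "last ys = ys ! (length ys - 1)" by (metis last_conv_nth less_zeroE list.size(3))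
  show ?thesis
  proof (cases "j = length ys - 1")
    case False
    with j have "ys ! j < ys ! (length ys - 1)"
      by (intro sorted_wrt_nth_less[OF assms(1)]) auto
    then show ?thesis using j last by simp
  qed (use j last in simp)
qed

lemma alternating_chain_last:
  assumes "alternating_chain S f ys" "ys \<noteq> []"
  shows "f (last ys) = odd (length ys)"
  using assms by (cases ys rule: rev_cases) (auto simp: alternating_chain_def nth_append)

lemma alternating_chain_snoc:
  assumes "alternating_chain S f ys" "x \<in> S" "\<forall>y\<in>set ys. y < x" "f x = even (length ys)"
  shows "alternating_chain S f (ys @ [x])"
  using assms by (auto simp: alternating_chain_def sorted_wrt_append nth_append less_Suc_eq)

context
  fixes S :: "'a::order set" and f :: "'a \<Rightarrow> bool"
  assumes finite_S: "finite S"
begin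

private abbreviation "chain_lengths x \<equiv>
  {length ys | ys. alternating_chain S f ys \<and> (\<forall>y\<in>set ys. y \<le> x)}"

private lemma finite_chain_lengths: "finite (chain_lengths x)"
  by (rule finite_subset[of _ "{..card S}"])
     (auto dest: length_alternating_chain_le[OF finite_S])

lemma length_le_alternation_height:
  assumes "alternating_chain S f ys" "\<forall>y\<in>set ys. y \<le> x"
  shows "length ys \<le> alternation_height S f x"
  unfolding alternation_height_def using finite_chain_lengths assms by (intro Max_ge) auto

lemma alternation_height_attained:
  obtains ys where "alternating_chain S f ys" "\<forall>y\<in>set ys. y \<le> x"
    "length ys = alternation_height S f x"
proof -
  have "[] \<in> {ys. alternating_chain S f ys}" by (simp add: alternating_chain_def)
  then have "alternation_height S f x \<in> chain_lengths x"
    unfolding alternation_height_def using finite_chain_lengths by (intro Max_in) auto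
  then show ?thesis using that by auto
qed

lemma alternation_height_mono:
  assumes "x \<le> x'"
  shows "alternation_height S f x \<le> alternation_height S f x'"
proof -
  obtain ys where "alternating_chain S f ys" "\<forall>y\<in>set ys. y \<le> x"
    "length ys = alternation_height S f x"
    by (rule alternation_height_attained)
  then show ?thesis
    using length_le_alternation_height[of ys x'] assms order_trans by metis
qed

lemma alternation_height_le:
  assumes no_violation: "\<And>xs. is_violation P k f xs \<Longrightarrow> \<not> set xs \<subseteq> S" and "S \<subseteq> P"
  shows "alternation_height S f x \<le> k"
proof (rule ccontr)
  assume "\<not> alternation_height S f x \<le> k"
  then obtain ys where ys: "alternating_chain S f ys" "length ys > k"
    using alternation_height_attained[of x] by (metis not_le)
  define xs where "xs = take (Suc k) ys"
  have "ys \<noteq> []" using ys(2) by auto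
  then have "f (ys ! 0)" using ys(1) unfolding alternating_chain_def by simp
  have "set xs \<subseteq> S"
    using ys(1) set_take_subset[of "Suc k" ys] unfolding xs_def alternating_chain_def by blast
  moreover have "is_violation P k f xs"
    using ys \<open>ys \<noteq> []\<close> \<open>f (ys ! 0)\<close> \<open>set xs \<subseteq> S\<close> \<open>S \<subseteq> P\<close>
    unfolding is_violation_def xs_def alternating_chain_def by auto
  ultimately show False using no_violation by blast
qed

text \<open>A longest chain below x whose last element disagrees with x under f could be extended by x.\<close>

lemma odd_alternation_height:
  assumes "x \<in> S"
  shows "odd (alternation_height S f x) = f x"
proof -
  obtain ys where ys: "alternating_chain S f ys" "\<forall>y\<in>set ys. y \<le> x"
    "length ys = alternation_height S f x"
    by (rule alternation_height_attained)
  show ?thesis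
  proof (cases "ys = []")
    case True
    have "\<not> f x"
    proof
      assume "f x"
      then have "alternating_chain S f [x]"
        using assms unfolding alternating_chain_def by simp
      then show False using length_le_alternation_height[of "[x]" x] ys(3) True by simp
    qed
    then show ?thesis using ys(3) True by simp
  next
    case False
    have f_last: "f (last ys) = odd (length ys)"
      using alternating_chain_last[OF ys(1) False] .
    show ?thesis
    proof (rule ccontr)
      assume ne: "odd (alternation_height S f x) \<noteq> f x"
      have "last ys \<le> x" using ys(2) False by simp
      moreover have "last ys \<noteq> x" using ne f_last ys(3) by auto
      ultimately have "\<forall>y\<in>set ys. y < x"
        using ys(1) sorted_wrt_less_le_last unfolding alternating_chain_def
        by (metis order.not_eq_order_implies_strict order.strict_trans1)
      then have "alternating_chain S f (ys @ [x])"
        using alternating_chain_snoc[OF ys(1) assms] ne ys(3) by simp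
      then show False
        using length_le_alternation_height[of "ys @ [x]" x] ys by auto
    qed
  qed
qed

end

lemma violation_free_extends_to_k_monotone:
  assumes "finite S" "S \<subseteq> P" and no_violation: "\<And>xs. is_violation P k f xs \<Longrightarrow> \<not> set xs \<subseteq> S"
  shows "\<exists>g. k_monotone P k g \<and> (\<forall>x\<in>S. g x = f x)"
proof (intro exI conjI ballI)
  let ?h = "alternation_height S f"
  show "k_monotone P k (\<lambda>x. odd (?h x))"
    using mono_onI[OF alternation_height_mono[OF \<open>finite S\<close>]]
      alternation_height_le[OF \<open>finite S\<close> no_violation \<open>S \<subseteq> P\<close>]
    by (rule k_monotone_odd_of_mono_bounded)
  show "odd (?h x) = f x" if "x \<in> S" for x
    using odd_alternation_height[OF \<open>finite S\<close> that] .
qed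

theorem theoremB5:
  fixes P :: "'a::order set" and f :: "'a \<Rightarrow> bool" and k :: nat and \<epsilon> :: real
  assumes "finite P"
    and "eps_far P k \<epsilon> f"
  shows "\<exists>M. is_matching (violation_edges P k f) M \<and> finite M \<and>
             (\<forall>e\<in>M. card e = k + 1) \<and>
             real (card M) \<ge> \<epsilon> * real (card P) / real (k + 1)"
proof -
  let ?E = "violation_edges P k f"
  obtain M where M: "is_matching ?E M" and max: "\<And>M'. is_matching ?E M' \<Longrightarrow> card M' \<le> card M"
    using ex_maximum_matching[OF finite_violation_edges[OF \<open>finite P\<close>]] by blast
  then have "M \<subseteq> ?E" unfolding is_matching_def by blast
  then have "finite M" and card_M: "\<forall>e\<in>M. card e = k + 1" and "\<Union>M \<subseteq> P"
    using finite_violation_edges[OF \<open>finite P\<close>] card_violation_edge violation_edges_subset_Pow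
    by (blast intro: finite_subset)+
  have "\<not> set xs \<subseteq> P - \<Union>M" if "is_violation P k f xs" for xs
    using violation_meets_maximum_matching[OF \<open>finite P\<close> M max that] by blast
  then obtain g where "k_monotone P k g" and g: "\<forall>x\<in>P - \<Union>M. g x = f x"
    using violation_free_extends_to_k_monotone[of "P - \<Union>M" P k f] \<open>finite P\<close> by blast
  have "card {x\<in>P. f x \<noteq> g x} \<le> card (\<Union>M)"
    using g by (intro card_mono finite_subset[OF \<open>\<Union>M \<subseteq> P\<close> \<open>finite P\<close>]) auto
  also have "\<dots> \<le> (k + 1) * card M"
    using card_M by (rule card_Union_le_uniform)
  finally have "\<epsilon> * real (card P) \<le> real (k + 1) * real (card M)"
    using eps_far_le_card_disagreement[OF \<open>eps_far P k \<epsilon> f\<close> \<open>k_monotone P k g\<close>]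
    by (metis of_nat_le_iff of_nat_mult order_trans)
  then have "\<epsilon> * real (card P) / real (k + 1) \<le> real (card M)"
    by (simp add: pos_divide_le_eq mult.commute)
  with M \<open>finite M\<close> card_M show ?thesis by blast
qed

end
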